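(* Consider FedMoSWA with client sampling (described in the context) applied to $F=\frac1m\sum_{i=1}^m F_i$, where each $F_i$ is $\mu$-strongly convex ($\mu\ge0$ allowed) and $\beta$-smooth. Then for any $\tilde\eta:=\eta_l\alpha K\in[0,1/\beta]$, $$\mathcal{C}_t\le\left(1-\frac sm\right)\mathcal{C}_{t-1}+\frac sm\left(4\beta\left(\mathbb{E}[F(\boldsymbol{\theta}^{t-1})]-F(\boldsymbol{\theta}^\star)\right)+2\beta^2\mathcal{E}_t\right).$$
   Context: FedMoSWA with sampling: $m$ clients, in round $t$ a set $\mathcal{S}^t$ of $s$ clients is sampled uniformly. Server holds $\boldsymbol{\theta}^{t-1}$ and control variable $\mathbf{m}$; each client has control variable $\boldsymbol{c}_i$. Each sampled client sets $\boldsymbol{\theta}^t_{i,0}=\boldsymbol{\theta}^{t-1}$ and for $k=1,\dots,K$: $\boldsymbol{\theta}^t_{i,k}=\boldsymbol{\theta}^t_{i,k-1}-\eta_l(g_i(\boldsymbol{\theta}^t_{i,k-1})+\mathbf{m}-\boldsymbol{c}_i)$, with $g_i$ an unbiased stochastic gradient of $F_i$, then sets $\boldsymbol{c}_i^t=\frac1K\sum_{k=1}^K g_i(\boldsymbol{\theta}^t_{i,k-1})$ (non-sampled clients keep $\boldsymbol{c}_i^t=\boldsymbol{c}_i^{t-1}$). The server sets $\boldsymbol{\theta}^t=\boldsymbol{\theta}^{t-1}+\alpha\left(\frac1s\sum_{i\in\mathcal{S}^t}\boldsymbol{\theta}^t_{i,K}-\boldsymbol{\theta}^{t-1}\right)$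 and $\mathbf{m}^t=\mathbf{m}^{t-1}+\gamma\frac1s\sum_{i\in\mathcal{S}^t}(\boldsymbol{c}_i^t-\mathbf{m}^{t-1})$. $\boldsymbol{\theta}^\star$ minimizes $F$. $\mathcal{E}_t:=\frac{1}{Km}\sum_{k=1}^K\sum_{i=1}^m\mathbb{E}\|\boldsymbol{\theta}^t_{i,k}-\boldsymbol{\theta}^{t-1}\|^2$; $\mathcal{C}_t:=\frac1m\sum_{i=1}^m\|\mathbb{E}[\boldsymbol{c}_i^t]-\nabla F_i(\boldsymbol{\theta}^\star)\|^2$. *)

theory Defs
  imports "HOL-Probability.Probability"
begin

definition has_gradient_everywhere :: "('a::euclidean_space \<Rightarrow> real) \<Rightarrow> ('a \<Rightarrow> 'a) \<Rightarrow> bool" where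
  "has_gradient_everywhere f gf \<longleftrightarrow> (\<forall>x. (f has_derivative (\<lambda>h. gf x \<bullet> h)) (at x))"

definition strongly_convex_grad :: "real \<Rightarrow> ('a::euclidean_space \<Rightarrow> real) \<Rightarrow> ('a \<Rightarrow> 'a) \<Rightarrow> bool" where
  "strongly_convex_grad mu f gf \<longleftrightarrow>
     (\<forall>x y. f y \<ge> f x + gf x \<bullet> (y - x) + mu / 2 * (norm (y - x))\<^sup>2)"

definition smooth_grad :: "real \<Rightarrow> ('a::euclidean_space \<Rightarrow> 'a) \<Rightarrow> bool" where
  "smooth_grad beta gf \<longleftrightarrow> (\<forall>x y. norm (gf x - gf y) \<le> beta * norm (x - y))"

definition uniform_subsets :: "nat \<Rightarrow> nat \<Rightarrow> nat set pmf" where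
  "uniform_subsets m s = pmf_of_set {A. A \<subseteq> {..<m} \<and> card A = s}"

definition sq_integrable :: "'w measure \<Rightarrow> ('w \<Rightarrow> 'a::euclidean_space) \<Rightarrow> bool" where
  "sq_integrable M X \<longleftrightarrow> X \<in> borel_measurable M \<and> integrable M X \<and> integrable M (\<lambda>w. (norm (X w))\<^sup>2)"

end

theory Submission
  imports Defs
begin

text \<open>A client is sampled with probability s/m, independently of its old control variable and
  of the stochastic gradients of the round. Hence E[c_i^t] is the convex combination of
  E[c_i^(t-1)] and of the expected mean of the K local stochastic gradients, with weights
  1 - s/m and s/m, and convexity of the squared norm gives the contraction term. By unbiasedness
  the expected mean of the stochastic gradients is the mean of the expected true gradients along
  the local trajectory; Jensen's inequality and beta-smoothness bound its squared distance to
  grad F_i(theta*) by 2 beta^2 times the local drift plus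
  2 E|grad F_i(theta^(t-1)) - grad F_i(theta*)|^2. Averaged over the clients, the last term is at
  most 4 beta (E F(theta^(t-1)) - F(theta*)) by cocoercivity of smooth convex functions, since the
  gradients grad F_i(theta*) sum to zero.\<close>

section \<open>Smooth convex functions\<close>

lemma descent_lemma:
  fixes f :: "'a::euclidean_space \<Rightarrow> real"
  assumes grad: "has_gradient_everywhere f gf" and smooth: "smooth_grad beta gf"
  shows "f y \<le> f x + gf x \<bullet> (y - x) + beta / 2 * (norm (y - x))\<^sup>2"
proof -
  define d where "d = y - x"
  define h where "h \<tau> = f (x + \<tau> *\<^sub>R d) - \<tau> * (gf x \<bullet> d) - beta / 2 * \<tau>\<^sup>2 * (norm d)\<^sup>2" for \<tau>
  have "h 1 \<le> h 0"
  proof (rule DERIV_nonpos_imp_nonincreasing[of 0 1 h])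
    fix \<tau> :: real assume \<tau>: "0 \<le> \<tau>" "\<tau> \<le> 1"
    have line: "((\<lambda>\<tau>. x + \<tau> *\<^sub>R d) has_derivative (\<lambda>s. s *\<^sub>R d)) (at \<tau>)"
      by (auto intro!: derivative_eq_intros)
    have "(f has_derivative (\<lambda>v. gf (x + \<tau> *\<^sub>R d) \<bullet> v)) (at (x + \<tau> *\<^sub>R d))"
      using grad unfolding has_gradient_everywhere_def by blast
    from has_derivative_compose[OF line this]
    have "((\<lambda>\<tau>. f (x + \<tau> *\<^sub>R d)) has_real_derivative gf (x + \<tau> *\<^sub>R d) \<bullet> d) (at \<tau>)"
      by (simp add: has_field_derivative_def mult_commute_abs)
    then have D: "(h has_real_derivative (gf (x + \<tau> *\<^sub>R d) - gf x) \<bullet> d - beta * \<tau> * (norm d)\<^sup>2) (at \<tau>)"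
      unfolding h_def by (auto intro!: derivative_eq_intros simp: inner_diff_left)
    have "(gf (x + \<tau> *\<^sub>R d) - gf x) \<bullet> d \<le> norm (gf (x + \<tau> *\<^sub>R d) - gf x) * norm d"
      by (rule norm_cauchy_schwarz)
    also have "\<dots> \<le> beta * norm (\<tau> *\<^sub>R d) * norm d"
      using smooth unfolding smooth_grad_def by (metis add_diff_cancel_left' mult_right_mono norm_ge_zero)
    also have "\<dots> = beta * \<tau> * (norm d)\<^sup>2"
      using \<tau> by (simp add: power2_eq_square)
    finally show "\<exists>y. (h has_real_derivative y) (at \<tau>) \<and> y \<le> 0"
      using D by auto
  qed simp
  then show ?thesis
    unfolding h_def d_def by simp
qed

lemma strongly_convex_grad_imp_convex:
  assumes "0 \<le> mu" "strongly_convex_grad mu f gf"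
  shows "strongly_convex_grad 0 f gf"
  unfolding strongly_convex_grad_def
proof (intro allI)
  fix x y
  have "f x + gf x \<bullet> (y - x) + mu / 2 * (norm (y - x))\<^sup>2 \<le> f y"
    using assms(2) unfolding strongly_convex_grad_def by blast
  moreover have "0 \<le> mu / 2 * (norm (y - x))\<^sup>2"
    using assms(1) by simp
  ultimately show "f x + gf x \<bullet> (y - x) + 0 / 2 * (norm (y - x))\<^sup>2 \<le> f y"
    by simp
qed

text \<open>Cocoercivity: compare the convexity lower bound at the point
  \<open>w = y - (1/beta) (gf y - gf x)\<close> with the descent-lemma upper bound there.\<close>
lemma smooth_convex_grad_diff_sq_le:
  fixes f :: "'a::euclidean_space \<Rightarrow> real"
  assumes grad: "has_gradient_everywhere f gf" and smooth: "smooth_grad beta gf"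
    and convex: "strongly_convex_grad 0 f gf" and beta: "0 < beta"
  shows "(norm (gf y - gf x))\<^sup>2 \<le> 2 * beta * (f y - f x - gf x \<bullet> (y - x))"
proof -
  define D where "D = gf y - gf x"
  define w where "w = y - (1 / beta) *\<^sub>R D"
  have lower: "f x + gf x \<bullet> (w - x) \<le> f w"
    using convex unfolding strongly_convex_grad_def by simp
  have upper: "f w \<le> f y + gf y \<bullet> (w - y) + beta / 2 * (norm (w - y))\<^sup>2"
    by (rule descent_lemma[OF grad smooth])
  have "gf y \<bullet> (w - y) - gf x \<bullet> (w - y) = - (1 / beta) * (norm D)\<^sup>2"
    unfolding w_def D_def by (simp add: inner_diff_left power2_norm_eq_inner algebra_simps)
  moreover have "beta / 2 * (norm (w - y))\<^sup>2 = (1 / beta) * (norm D)\<^sup>2 / 2"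
    unfolding w_def using beta by (simp add: power2_eq_square field_simps)
  moreover have "gf x \<bullet> (w - x) = gf x \<bullet> (w - y) + gf x \<bullet> (y - x)"
    by (simp add: inner_diff_right)
  ultimately have "(1 / beta) * (norm D)\<^sup>2 / 2 \<le> f y - f x - gf x \<bullet> (y - x)"
    using lower upper by linarith
  then show ?thesis
    unfolding D_def using beta by (simp add: field_simps)
qed

lemma has_gradient_everywhere_sum:
  assumes "\<And>i. i \<in> I \<Longrightarrow> has_gradient_everywhere (f i) (gf i)"
  shows "has_gradient_everywhere (\<lambda>x. \<Sum>i\<in>I. f i x) (\<lambda>x. \<Sum>i\<in>I. gf i x)"
  unfolding has_gradient_everywhere_def
proof
  fix x
  have "((\<lambda>x. \<Sum>i\<in>I. f i x) has_derivative (\<lambda>v. \<Sum>i\<in>I. gf i x \<bullet> v)) (at x)"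
    using assms unfolding has_gradient_everywhere_def by (intro has_derivative_sum) auto
  then show "((\<lambda>x. \<Sum>i\<in>I. f i x) has_derivative (\<lambda>v. (\<Sum>i\<in>I. gf i x) \<bullet> v)) (at x)"
    by (simp add: inner_sum_left)
qed

lemma gradient_eq_0_at_minimum:
  assumes grad: "has_gradient_everywhere f gf" and min: "\<And>y. f x \<le> f y"
  shows "gf x = 0"
proof -
  have deriv: "(f has_derivative (\<lambda>v. gf x \<bullet> v)) (at x)"
    using grad unfolding has_gradient_everywhere_def by blast
  have "(\<lambda>v. gf x \<bullet> v) = (\<lambda>v. 0)"
    using differential_zero_maxmin[of x UNIV f, OF _ _ deriv] min by auto
  from fun_cong[OF this, of "gf x"] show ?thesis
    by simp
qed

lemma sum_grad_dist_sq_le: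
  fixes f :: "'i \<Rightarrow> 'a::euclidean_space \<Rightarrow> real"
  assumes grad: "\<And>i. i \<in> I \<Longrightarrow> has_gradient_everywhere (f i) (gf i)"
    and smooth: "\<And>i. i \<in> I \<Longrightarrow> smooth_grad beta (gf i)"
    and convex: "\<And>i. i \<in> I \<Longrightarrow> strongly_convex_grad 0 (f i) (gf i)"
    and beta: "0 < beta"
    and min: "\<And>y. (\<Sum>i\<in>I. f i xs) \<le> (\<Sum>i\<in>I. f i y)"
  shows "(\<Sum>i\<in>I. (norm (gf i x - gf i xs))\<^sup>2) \<le> 2 * beta * ((\<Sum>i\<in>I. f i x) - (\<Sum>i\<in>I. f i xs))"
proof -
  have zero: "(\<Sum>i\<in>I. gf i xs) = 0"
    using gradient_eq_0_at_minimum[OF has_gradient_everywhere_sum[OF grad] min] .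
  have "(\<Sum>i\<in>I. (norm (gf i x - gf i xs))\<^sup>2) \<le> (\<Sum>i\<in>I. 2 * beta * (f i x - f i xs - gf i xs \<bullet> (x - xs)))"
    by (intro sum_mono smooth_convex_grad_diff_sq_le grad smooth convex beta)
  also have "\<dots> = 2 * beta * ((\<Sum>i\<in>I. f i x) - (\<Sum>i\<in>I. f i xs) - (\<Sum>i\<in>I. gf i xs) \<bullet> (x - xs))"
    by (simp add: sum_distrib_left[symmetric] sum_subtractf inner_sum_left)
  finally show ?thesis
    using zero by simp
qed

section \<open>Elementary inequalities and square-integrable random vectors\<close>

lemma norm_add_sq_le:
  fixes a b :: "'a::real_normed_vector"
  shows "(norm (a + b))\<^sup>2 \<le> 2 * (norm a)\<^sup>2 + 2 * (norm b)\<^sup>2"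
proof -
  have "(norm (a + b))\<^sup>2 \<le> (norm a + norm b)\<^sup>2"
    by (simp add: norm_triangle_ineq power_mono)
  also have "\<dots> \<le> 2 * (norm a)\<^sup>2 + 2 * (norm b)\<^sup>2"
    using sum_squares_bound[of "norm a" "norm b"] by (simp add: power2_sum)
  finally show ?thesis .
qed

lemma norm_mean_sq_le:
  fixes u :: "'i \<Rightarrow> 'a::real_normed_vector"
  assumes "finite A" "A \<noteq> {}"
  shows "(norm ((1 / real (card A)) *\<^sub>R (\<Sum>k\<in>A. u k)))\<^sup>2
    \<le> (1 / real (card A)) * (\<Sum>k\<in>A. (norm (u k))\<^sup>2)"
proof -
  have n: "0 < real (card A)"
    using assms by (simp add: card_gt_0_iff)
  have "(norm (\<Sum>k\<in>A. u k))\<^sup>2 \<le> (\<Sum>k\<in>A. norm (u k))\<^sup>2"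
    by (simp add: norm_sum power_mono)
  also have "\<dots> \<le> (\<Sum>k\<in>A. (norm (u k))\<^sup>2) * real (card A)"
    by (rule sum_squared_le_sum_of_squares)
  finally show ?thesis
    using n by (simp add: power_divide power2_eq_square field_simps)
qed

lemma norm_convex_comb_sq_le:
  fixes u v :: "'a::real_inner"
  assumes "0 \<le> p" "p \<le> 1"
  shows "(norm (p *\<^sub>R u + (1 - p) *\<^sub>R v))\<^sup>2 \<le> p * (norm u)\<^sup>2 + (1 - p) * (norm v)\<^sup>2"
proof -
  have "p * (norm u)\<^sup>2 + (1 - p) * (norm v)\<^sup>2 - (norm (p *\<^sub>R u + (1 - p) *\<^sub>R v))\<^sup>2
        = p * (1 - p) * (norm (u - v))\<^sup>2"
    by (simp add: power2_norm_eq_inner inner_add_left inner_add_right inner_diff_left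
        inner_diff_right inner_commute algebra_simps)
  moreover have "0 \<le> p * (1 - p) * (norm (u - v))\<^sup>2"
    using assms by simp
  ultimately show ?thesis
    by linarith
qed

lemma sum_shift_le:
  fixes a :: "nat \<Rightarrow> real"
  assumes "a 0 = 0" "0 \<le> a K"
  shows "(\<Sum>k\<in>{1..K}. a (k - 1)) \<le> (\<Sum>k\<in>{1..K}. a k)"
proof -
  have "(\<Sum>k\<in>{1..K}. a (k - 1)) + a K = (\<Sum>k\<in>{1..K}. a k) + a 0"
    by (induction K) (simp_all add: sum.cl_ivl_Suc)
  then show ?thesis
    using assms by linarith
qed

lemma mean_le_of_convex_comb_le:
  fixes C A B :: "'i \<Rightarrow> real"
  assumes "\<And>i. i \<in> I \<Longrightarrow> C i \<le> (1 - p) * A i + p * B i"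
  shows "(1 / real (card I)) * (\<Sum>i\<in>I. C i)
    \<le> (1 - p) * ((1 / real (card I)) * (\<Sum>i\<in>I. A i)) + p * ((1 / real (card I)) * (\<Sum>i\<in>I. B i))"
proof -
  have "(\<Sum>i\<in>I. C i) \<le> (1 - p) * (\<Sum>i\<in>I. A i) + p * (\<Sum>i\<in>I. B i)"
    using sum_mono[OF assms] by (simp add: sum.distrib sum_distrib_left)
  from mult_left_mono[OF this, of "1 / real (card I)"] show ?thesis
    by (simp add: algebra_simps diff_divide_distrib)
qed

lemma sq_integrable_diff:
  assumes X: "sq_integrable M X" and Y: "sq_integrable M Y"
  shows "sq_integrable M (\<lambda>w. X w - Y w)"
  unfolding sq_integrable_def
proof (intro conjI)
  show meas: "(\<lambda>w. X w - Y w) \<in> borel_measurable M" and "integrable M (\<lambda>w. X w - Y w)"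
    using assms unfolding sq_integrable_def by auto
  have "integrable M (\<lambda>w. 2 * (norm (X w))\<^sup>2 + 2 * (norm (Y w))\<^sup>2)"
    using assms unfolding sq_integrable_def by auto
  then show "integrable M (\<lambda>w. (norm (X w - Y w))\<^sup>2)"
    by (rule Bochner_Integration.integrable_bound)
      (use meas norm_add_sq_le[of "X _" "- Y _"] in auto)
qed

context finite_measure
begin

lemma sq_integrable_lipschitz:
  assumes X: "sq_integrable M X" and L: "0 \<le> L"
    and lip: "\<And>x y. norm (f x - f y) \<le> L * norm (x - y)"
  shows "sq_integrable M (\<lambda>w. f (X w))"
proof -
  have "L-lipschitz_on UNIV f"
    by (rule lipschitz_onI) (use lip L in \<open>auto simp: dist_norm\<close>)
  then have "f \<in> borel_measurable borel"
    by (intro borel_measurable_continuous_onI lipschitz_on_continuous_on)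
  then have meas: "(\<lambda>w. f (X w)) \<in> borel_measurable M"
    using X unfolding sq_integrable_def by (auto intro: measurable_compose)
  have lin: "norm (f x) \<le> norm (f 0) + L * norm x" for x
    using lip[of x 0] norm_triangle_ineq2[of "f x" "f 0"] by simp
  have quad: "(norm (f x))\<^sup>2 \<le> 2 * (norm (f 0))\<^sup>2 + 2 * L\<^sup>2 * (norm x)\<^sup>2" for x
  proof -
    have "(norm (f x))\<^sup>2 \<le> (norm (f 0) + L * norm x)\<^sup>2"
      using lin[of x] by (simp add: power_mono)
    also have "\<dots> \<le> 2 * (norm (f 0))\<^sup>2 + 2 * (L * norm x)\<^sup>2"
      using sum_squares_bound[of "norm (f 0)" "L * norm x"] by (simp add: power2_sum)
    finally show ?thesis
      by (simp add: power_mult_distrib)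
  qed
  have lin_int: "integrable M (\<lambda>w. norm (f 0) + L * norm (X w))"
    and quad_int: "integrable M (\<lambda>w. 2 * (norm (f 0))\<^sup>2 + 2 * L\<^sup>2 * (norm (X w))\<^sup>2)"
    using X unfolding sq_integrable_def by auto
  show ?thesis
    unfolding sq_integrable_def
  proof (intro conjI meas)
    show "integrable M (\<lambda>w. f (X w))"
      by (rule Bochner_Integration.integrable_bound[OF lin_int meas])
        (use lin L in \<open>auto intro!: AE_I2 simp: abs_le_iff\<close>)
    show "integrable M (\<lambda>w. (norm (f (X w)))\<^sup>2)"
      by (rule Bochner_Integration.integrable_bound[OF quad_int]) (use meas quad in auto)
  qed
qed

lemma sq_integrable_grad_diff:
  assumes "smooth_grad beta g" "0 \<le> beta" "sq_integrable M X"
  shows "sq_integrable M (\<lambda>w. g (X w) - g z)"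
  using assms unfolding smooth_grad_def
  by (intro sq_integrable_lipschitz[where L=beta and f="\<lambda>x. g x - g z"]) auto

end

lemma (in prob_space) norm_expectation_sq_le:
  assumes "sq_integrable M X"
  shows "(norm (expectation X))\<^sup>2 \<le> expectation (\<lambda>w. (norm (X w))\<^sup>2)"
proof -
  have "(norm (expectation X))\<^sup>2 \<le> (expectation (\<lambda>w. norm (X w)))\<^sup>2"
    by (simp add: integral_norm_bound power_mono)
  also have "\<dots> \<le> expectation (\<lambda>w. (norm (X w))\<^sup>2)"
    using assms unfolding sq_integrable_def
    by (intro jensens_inequality[where I=UNIV and q=power2]) (auto simp: convex_power2)
  finally show ?thesis .
qed

section \<open>Uniform client sampling\<close>

lemma card_subsets_containing:
  assumes i: "i < m" and s: "1 \<le> s"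
  shows "card {A. A \<subseteq> {..<m} \<and> card A = s \<and> i \<in> A} = (m - 1) choose (s - 1)"
proof -
  let ?B = "{B. B \<subseteq> {..<m} - {i} \<and> card B = s - 1}"
  have fin: "finite ({..<m} - {i})"
    by simp
  have inj: "inj_on (insert i) ?B"
    by (rule inj_onI) (metis (no_types, lifting) Diff_insert_absorb insert_Diff_single
        mem_Collect_eq subset_Diff_insert)
  have img: "insert i ` ?B = {A. A \<subseteq> {..<m} \<and> card A = s \<and> i \<in> A}"
  proof (rule set_eqI, rule iffI)
    fix A assume "A \<in> insert i ` ?B"
    then obtain B where B: "B \<in> ?B" "A = insert i B"
      by blast
    have "finite B"
      using B(1) finite_subset[OF _ fin] by auto
    moreover have "i \<notin> B"
      using B(1) by auto
    ultimately have "card A = s"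
      using B s by auto
    then show "A \<in> {A. A \<subseteq> {..<m} \<and> card A = s \<and> i \<in> A}"
      using B i by auto
  next
    fix A assume A: "A \<in> {A. A \<subseteq> {..<m} \<and> card A = s \<and> i \<in> A}"
    then have "finite A"
      using finite_subset by blast
    then have "card (A - {i}) = s - 1"
      using A by (simp add: card_Diff_singleton)
    then have "A - {i} \<in> ?B"
      using A by auto
    moreover have "A = insert i (A - {i})"
      using A by auto
    ultimately show "A \<in> insert i ` ?B"
      by blast
  qed
  show ?thesis
    using card_image[OF inj] img n_subsets[OF fin, of "s - 1"] i by simp
qed

lemma prob_uniform_subsets_member:
  assumes i: "i < m" and s: "1 \<le> s" "s \<le> m"
  shows "measure_pmf.prob (uniform_subsets m s) {A. i \<in> A} = real s / real m"
proof -
  let ?U = "{A. A \<subseteq> {..<m} \<and> card A = s}"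
  have fin: "finite ?U"
    by (rule finite_subset[of _ "Pow {..<m}"]) auto
  have card: "card ?U = m choose s"
    using n_subsets[of "{..<m}" s] by simp
  then have "?U \<noteq> {}"
    using s by (metis card.empty binomial_eq_0_iff not_le)
  moreover have "?U \<inter> {A. i \<in> A} = {A. A \<subseteq> {..<m} \<and> card A = s \<and> i \<in> A}"
    by auto
  ultimately have "measure_pmf.prob (uniform_subsets m s) {A. i \<in> A}
      = real ((m - 1) choose (s - 1)) / real (m choose s)"
    unfolding uniform_subsets_def
    using measure_pmf_of_set[OF _ fin] card card_subsets_containing[OF i s(1)] by simp
  also have "\<dots> = real s / real m"
    using times_binomial_minus1_eq[of s m] s i
    by (simp add: field_simps flip: of_nat_mult)
  finally show ?thesis .
qed

context prob_space
begin

lemma indep_var_of_indep_set: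
  assumes G: "subalgebra M G" and H: "subalgebra M H" and indep: "indep_set (sets G) (sets H)"
    and X: "X \<in> measurable G N" and Y: "Y \<in> measurable H N"
  shows "indep_var N X N Y"
proof -
  have sigma_sub: "sigma_sets (space M) {Z -` A \<inter> space M |A. A \<in> sets N} \<subseteq> sets F"
    if "subalgebra M F" "Z \<in> measurable F N" for F Z
  proof -
    have sp: "space F = space M"
      using that(1) unfolding subalgebra_def by simp
    then have "{Z -` A \<inter> space M |A. A \<in> sets N} \<subseteq> sets F"
      using that(2) by (auto simp: measurable_def)
    from sets.sigma_sets_subset[OF this] show ?thesis
      by (simp add: sp)
  qed
  have "indep_set (sigma_sets (space M) {X -` A \<inter> space M |A. A \<in> sets N})
      (sigma_sets (space M) {Y -` A \<inter> space M |A. A \<in> sets N})"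
    using indep unfolding indep_set_def
    by (rule indep_sets_mono_sets) (use sigma_sub[OF G X] sigma_sub[OF H Y] in \<open>auto split: bool.split\<close>)
  then show ?thesis
    using measurable_from_subalg[OF G X] measurable_from_subalg[OF H Y] by (simp add: indep_var_eq)
qed

lemma subalgebra_vimage_algebra:
  assumes "S \<in> measurable M N"
  shows "subalgebra M (vimage_algebra (space M) S N)"
  unfolding subalgebra_def
  using assms by (auto simp: sets_vimage_algebra2 measurable_def)

lemma integral_if_member_indep:
  fixes X :: "'a \<Rightarrow> 'b::euclidean_space" and S :: "'a \<Rightarrow> nat set"
  assumes S: "S \<in> measurable M (count_space UNIV)" and H: "subalgebra M H"
    and indep: "indep_set (sets (vimage_algebra (space M) S (count_space UNIV))) (sets H)"
    and X: "X \<in> borel_measurable H" "integrable M X"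
  shows "(LINT w|M. (if i \<in> S w then X w else 0)) = prob {w\<in>space M. i \<in> S w} *\<^sub>R (LINT w|M. X w)"
proof -
  define A where "A = {w\<in>space M. i \<in> S w}"
  have A_vimage: "A \<in> sets (vimage_algebra (space M) S (count_space UNIV))"
    using in_vimage_algebra[of "{T. i \<in> T}" "count_space UNIV" S "space M"]
    by (simp add: A_def Int_def conj_commute)
  then have A: "A \<in> events"
    using subalgebra_vimage_algebra[OF S] unfolding subalgebra_def by blast
  have "(LINT w|M. indicator A w *\<^sub>R X w) = prob A *\<^sub>R (LINT w|M. X w)"
  proof (rule euclidean_eqI)
    fix b :: 'b assume "b \<in> Basis"
    have "indep_var borel (indicator A :: 'a \<Rightarrow> real) borel (\<lambda>w. X w \<bullet> b)"
      using A_vimage X(1)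
      by (intro indep_var_of_indep_set[OF subalgebra_vimage_algebra[OF S] H indep]) auto
    moreover have "integrable M (indicator A :: 'a \<Rightarrow> real)"
      by (intro integrable_real_indicator A) (simp add: less_top[symmetric])
    ultimately have indep_prod:
      "(LINT w|M. indicator A w * (X w \<bullet> b)) = (LINT w|M. indicator A w) * (LINT w|M. X w \<bullet> b)"
      using X(2) by (intro indep_var_lebesgue_integral) auto
    have "(LINT w|M. indicator A w *\<^sub>R X w) \<bullet> b = (LINT w|M. (indicator A w *\<^sub>R X w) \<bullet> b)"
      by (rule integral_inner_left[symmetric]) (rule integrable_mult_indicator[OF A X(2)])
    also have "\<dots> = (LINT w|M. indicator A w * (X w \<bullet> b))"
      by simp
    also have "\<dots> = (prob A *\<^sub>R (LINT w|M. X w)) \<bullet> b"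
      unfolding indep_prod using A X(2) by simp
    finally show "(LINT w|M. indicator A w *\<^sub>R X w) \<bullet> b = (prob A *\<^sub>R (LINT w|M. X w)) \<bullet> b" .
  qed
  moreover have "(LINT w|M. (if i \<in> S w then X w else 0)) = (LINT w|M. indicator A w *\<^sub>R X w)"
    by (rule Bochner_Integration.integral_cong) (auto simp: A_def indicator_def)
  ultimately show ?thesis
    by (simp add: A_def)
qed

lemma expectation_sampled_choice:
  fixes X Z :: "'a \<Rightarrow> 'b::euclidean_space" and S :: "'a \<Rightarrow> nat set"
  assumes S: "S \<in> measurable M (count_space UNIV)"
    and S_unif: "distr M (count_space UNIV) S = measure_pmf (uniform_subsets m s)"
    and i: "i < m" and s: "1 \<le> s" "s \<le> m"
    and H: "subalgebra M H"
    and indep: "indep_set (sets (vimage_algebra (space M) S (count_space UNIV))) (sets H)"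
    and X: "X \<in> borel_measurable H" "integrable M X"
    and Z: "Z \<in> borel_measurable H" "integrable M Z"
  shows "(LINT w|M. (if i \<in> S w then X w else Z w))
    = (real s / real m) *\<^sub>R (LINT w|M. X w) + (1 - real s / real m) *\<^sub>R (LINT w|M. Z w)"
proof -
  have A_eq: "{w\<in>space M. i \<in> S w} = S -` {T. i \<in> T} \<inter> space M"
    by auto
  have A: "{w\<in>space M. i \<in> S w} \<in> events"
    unfolding A_eq using S by (rule measurable_sets) simp
  have "prob {w\<in>space M. i \<in> S w} = measure (distr M (count_space UNIV) S) {T. i \<in> T}"
    unfolding A_eq using S by (simp add: measure_distr)
  also have "\<dots> = real s / real m"
    using S_unif prob_uniform_subsets_member[OF i s] by simp
  finally have prob: "prob {w\<in>space M. i \<in> S w} = real s / real m" .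
  have cut: "integrable M (\<lambda>w. if i \<in> S w then Y w else 0)" if "integrable M Y" for Y :: "'a \<Rightarrow> 'b"
    by (rule Bochner_Integration.integrable_bound[OF that])
      (use A that in \<open>auto intro!: measurable_If\<close>)
  have "(LINT w|M. (if i \<in> S w then X w else Z w))
      = (LINT w|M. (if i \<in> S w then X w else 0) + (Z w - (if i \<in> S w then Z w else 0)))"
    by (rule Bochner_Integration.integral_cong) auto
  also have "\<dots> = (LINT w|M. (if i \<in> S w then X w else 0)) + ((LINT w|M. Z w) - (LINT w|M. (if i \<in> S w then Z w else 0)))"
    using cut X(2) Z(2) by simp
  also have "\<dots> = (real s / real m) *\<^sub>R (LINT w|M. X w) + (1 - real s / real m) *\<^sub>R (LINT w|M. Z w)"
    using integral_if_member_indep[OF S H indep X] integral_if_member_indep[OF S H indep Z] prob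
    by (simp add: algebra_simps)
  finally show ?thesis .
qed

end

section \<open>Error of the client control variables\<close>

context prob_space
begin

lemma expectation_grad_dist_sq_le:
  assumes smooth: "smooth_grad beta g" and beta: "0 \<le> beta"
    and X: "sq_integrable M X" and V: "sq_integrable M V"
  shows "expectation (\<lambda>w. (norm (g (X w) - g z))\<^sup>2)
    \<le> 2 * beta\<^sup>2 * expectation (\<lambda>w. (norm (X w - V w))\<^sup>2)
      + 2 * expectation (\<lambda>w. (norm (g (V w) - g z))\<^sup>2)"
proof -
  have pointwise: "(norm (g (X w) - g z))\<^sup>2
      \<le> 2 * beta\<^sup>2 * (norm (X w - V w))\<^sup>2 + 2 * (norm (g (V w) - g z))\<^sup>2" for w
  proof -
    have "norm (g (X w) - g (V w)) \<le> beta * norm (X w - V w)"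
      using smooth unfolding smooth_grad_def by blast
    then have "(norm (g (X w) - g (V w)))\<^sup>2 \<le> beta\<^sup>2 * (norm (X w - V w))\<^sup>2"
      by (metis norm_ge_zero power_mono power_mult_distrib)
    moreover have "(norm (g (X w) - g z))\<^sup>2 \<le> 2 * (norm (g (X w) - g (V w)))\<^sup>2 + 2 * (norm (g (V w) - g z))\<^sup>2"
      using norm_add_sq_le[of "g (X w) - g (V w)" "g (V w) - g z"] by simp
    ultimately show ?thesis
      by linarith
  qed
  have int: "integrable M (\<lambda>w. (norm (g (X w) - g z))\<^sup>2)"
    "integrable M (\<lambda>w. (norm (X w - V w))\<^sup>2)"
    "integrable M (\<lambda>w. (norm (g (V w) - g z))\<^sup>2)"
    using sq_integrable_grad_diff[OF smooth beta] sq_integrable_diff[OF X V] X V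
    unfolding sq_integrable_def by blast+
  have "expectation (\<lambda>w. (norm (g (X w) - g z))\<^sup>2)
      \<le> expectation (\<lambda>w. 2 * beta\<^sup>2 * (norm (X w - V w))\<^sup>2 + 2 * (norm (g (V w) - g z))\<^sup>2)"
    by (rule integral_mono) (use int pointwise in auto)
  also have "\<dots> = 2 * beta\<^sup>2 * expectation (\<lambda>w. (norm (X w - V w))\<^sup>2)
      + 2 * expectation (\<lambda>w. (norm (g (V w) - g z))\<^sup>2)"
    using int by simp
  finally show ?thesis .
qed

text \<open>The drift of the starting point \<open>x 0\<close> vanishes, so the drift averaged over the gradient
  points \<open>x 0, \<dots>, x (K - 1)\<close> is at most the drift averaged over the iterates \<open>x 1, \<dots>, x K\<close>.\<close>
lemma norm_mean_expectation_grad_sq_le: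
  assumes smooth: "smooth_grad beta g" and beta: "0 \<le> beta" and K: "1 \<le> K"
    and x: "\<And>k. k \<le> K \<Longrightarrow> sq_integrable M (x k)"
  shows "(norm ((1 / real K) *\<^sub>R (\<Sum>k\<in>{1..K}. expectation (\<lambda>w. g (x (k - 1) w))) - g z))\<^sup>2
    \<le> 2 * beta\<^sup>2 * ((1 / real K) * (\<Sum>k\<in>{1..K}. expectation (\<lambda>w. (norm (x k w - x 0 w))\<^sup>2)))
      + 2 * expectation (\<lambda>w. (norm (g (x 0 w) - g z))\<^sup>2)"
proof -
  define a where "a k = expectation (\<lambda>w. (norm (x k w - x 0 w))\<^sup>2)" for k
  define h where "h = expectation (\<lambda>w. (norm (g (x 0 w) - g z))\<^sup>2)"
  have sq: "sq_integrable M (\<lambda>w. g (x (k - 1) w) - g z)" if "k \<in> {1..K}" for k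
    using that by (intro sq_integrable_grad_diff[OF smooth beta] x) auto
  have "integrable M (\<lambda>w. g (x (k - 1) w))" if "k \<in> {1..K}" for k
    using sq_integrable_lipschitz[OF x beta, of "k - 1" g] that smooth
    unfolding sq_integrable_def smooth_grad_def by auto
  then have "(\<Sum>k\<in>{1..K}. expectation (\<lambda>w. g (x (k - 1) w) - g z))
      = (\<Sum>k\<in>{1..K}. expectation (\<lambda>w. g (x (k - 1) w))) - real K *\<^sub>R g z"
    by (simp add: prob_space sum_subtractf sum_constant_scaleR)
  then have "(1 / real K) *\<^sub>R (\<Sum>k\<in>{1..K}. expectation (\<lambda>w. g (x (k - 1) w))) - g z
      = (1 / real (card {1..K})) *\<^sub>R (\<Sum>k\<in>{1..K}. expectation (\<lambda>w. g (x (k - 1) w) - g z))"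
    using K by (simp add: scaleR_diff_right)
  then have "(norm ((1 / real K) *\<^sub>R (\<Sum>k\<in>{1..K}. expectation (\<lambda>w. g (x (k - 1) w))) - g z))\<^sup>2
      \<le> (1 / real K) * (\<Sum>k\<in>{1..K}. (norm (expectation (\<lambda>w. g (x (k - 1) w) - g z)))\<^sup>2)"
    using norm_mean_sq_le[of "{1..K}"] K by simp
  also have "\<dots> \<le> (1 / real K) * (\<Sum>k\<in>{1..K}. 2 * beta\<^sup>2 * a (k - 1) + 2 * h)"
  proof (intro mult_left_mono sum_mono order.trans[OF norm_expectation_sq_le])
    fix k assume "k \<in> {1..K}"
    then show "sq_integrable M (\<lambda>w. g (x (k - 1) w) - g z)"
      and "expectation (\<lambda>w. (norm (g (x (k - 1) w) - g z))\<^sup>2) \<le> 2 * beta\<^sup>2 * a (k - 1) + 2 * h"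
      unfolding a_def h_def using sq by (auto intro!: expectation_grad_dist_sq_le smooth beta x)
  qed simp
  also have "\<dots> = 2 * beta\<^sup>2 * ((1 / real K) * (\<Sum>k\<in>{1..K}. a (k - 1))) + 2 * h"
    using K by (simp add: sum.distrib sum_distrib_left[symmetric] field_simps)
  also have "\<dots> \<le> 2 * beta\<^sup>2 * ((1 / real K) * (\<Sum>k\<in>{1..K}. a k)) + 2 * h"
    using sum_shift_le[of a K] by (intro add_right_mono mult_left_mono) (auto simp: a_def divide_right_mono)
  finally show ?thesis
    unfolding a_def h_def .
qed

lemma expectation_eq_of_set_integral_eq:
  assumes "subalgebra M F" and "\<And>A. A \<in> sets F \<Longrightarrow> (LINT w:A|M. X w) = (LINT w:A|M. Y w)"
  shows "expectation X = expectation Y"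
proof -
  have "space M \<in> sets F"
    using assms(1) sets.top[of F] unfolding subalgebra_def by simp
  from assms(2)[OF this] show ?thesis
    by (simp add: set_lebesgue_integral_def cong: Bochner_Integration.integral_cong)
qed

lemma sampled_control_error_le:
  fixes S :: "'a \<Rightarrow> nat set" and G x :: "nat \<Rightarrow> 'a \<Rightarrow> 'b::euclidean_space"
  assumes S: "S \<in> measurable M (count_space UNIV)"
    and S_unif: "distr M (count_space UNIV) S = measure_pmf (uniform_subsets m s)"
    and i: "i < m" and s: "1 \<le> s" "s \<le> m" and K: "1 \<le> K"
    and H: "subalgebra M H"
    and indep: "indep_set (sets (vimage_algebra (space M) S (count_space UNIV))) (sets H)"
    and c_old: "c_old \<in> borel_measurable H" "integrable M c_old"
    and G: "\<And>k. 1 \<le> k \<Longrightarrow> k \<le> K \<Longrightarrow> G k \<in> borel_measurable H"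
      "\<And>k. 1 \<le> k \<Longrightarrow> k \<le> K \<Longrightarrow> integrable M (G k)"
    and c_new: "\<And>w. c_new w = (if i \<in> S w then (1 / real K) *\<^sub>R (\<Sum>k\<in>{1..K}. G k w) else c_old w)"
    and F: "\<And>k. 1 \<le> k \<Longrightarrow> k \<le> K \<Longrightarrow> subalgebra M (F k)"
    and unbiased: "\<And>k A. 1 \<le> k \<Longrightarrow> k \<le> K \<Longrightarrow> A \<in> sets (F k) \<Longrightarrow>
      (LINT w:A|M. G k w) = (LINT w:A|M. g (x (k - 1) w))"
    and smooth: "smooth_grad beta g" and beta: "0 \<le> beta"
    and x: "\<And>k. k \<le> K \<Longrightarrow> sq_integrable M (x k)"
  shows "(norm (expectation c_new - g z))\<^sup>2
    \<le> (1 - real s / real m) * (norm (expectation c_old - g z))\<^sup>2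
      + real s / real m *
        (2 * beta\<^sup>2 * ((1 / real K) * (\<Sum>k\<in>{1..K}. expectation (\<lambda>w. (norm (x k w - x 0 w))\<^sup>2)))
         + 2 * expectation (\<lambda>w. (norm (g (x 0 w) - g z))\<^sup>2))"
proof -
  define p where "p = real s / real m"
  define Y where "Y w = (1 / real K) *\<^sub>R (\<Sum>k\<in>{1..K}. G k w)" for w
  have p: "0 \<le> p" "p \<le> 1"
    using s unfolding p_def by auto
  have "expectation c_new = expectation (\<lambda>w. if i \<in> S w then Y w else c_old w)"
    unfolding c_new Y_def ..
  also have "\<dots> = p *\<^sub>R expectation Y + (1 - p) *\<^sub>R expectation c_old"
    unfolding p_def Y_def using G
    by (intro expectation_sampled_choice[OF S S_unif i s H indep _ _ c_old] integrable_scaleR_right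
        Bochner_Integration.integrable_sum) auto
  finally have "expectation c_new - g z = p *\<^sub>R (expectation Y - g z) + (1 - p) *\<^sub>R (expectation c_old - g z)"
    by (simp add: algebra_simps)
  then have convex: "(norm (expectation c_new - g z))\<^sup>2
      \<le> p * (norm (expectation Y - g z))\<^sup>2 + (1 - p) * (norm (expectation c_old - g z))\<^sup>2"
    using norm_convex_comb_sq_le[OF p] by simp
  have "expectation (G k) = expectation (\<lambda>w. g (x (k - 1) w))" if "k \<in> {1..K}" for k
    using that by (intro expectation_eq_of_set_integral_eq[OF F unbiased]) auto
  then have "expectation Y = (1 / real K) *\<^sub>R (\<Sum>k\<in>{1..K}. expectation (\<lambda>w. g (x (k - 1) w)))"
    unfolding Y_def using G(2) by (simp add: Bochner_Integration.integral_sum)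
  then have "(norm (expectation Y - g z))\<^sup>2
      \<le> 2 * beta\<^sup>2 * ((1 / real K) * (\<Sum>k\<in>{1..K}. expectation (\<lambda>w. (norm (x k w - x 0 w))\<^sup>2)))
        + 2 * expectation (\<lambda>w. (norm (g (x 0 w) - g z))\<^sup>2)"
    using norm_mean_expectation_grad_sq_le[where x=x and z=z, OF smooth beta K x] by simp
  from mult_left_mono[OF this p(1)] show ?thesis
    using convex unfolding p_def by linarith
qed

lemma expectation_mean_grad_dist_sq_le:
  fixes f :: "nat \<Rightarrow> 'b::euclidean_space \<Rightarrow> real"
  assumes m: "1 \<le> m"
    and grad: "\<And>i. i < m \<Longrightarrow> has_gradient_everywhere (f i) (gf i)"
    and mu: "0 \<le> mu" and sconv: "\<And>i. i < m \<Longrightarrow> strongly_convex_grad mu (f i) (gf i)"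
    and beta: "0 < beta" and smooth: "\<And>i. i < m \<Longrightarrow> smooth_grad beta (gf i)"
    and min: "\<And>y. (1 / real m) * (\<Sum>i<m. f i xs) \<le> (1 / real m) * (\<Sum>i<m. f i y)"
    and X: "sq_integrable M X" and f_int: "\<And>i. i < m \<Longrightarrow> integrable M (\<lambda>w. f i (X w))"
  shows "(1 / real m) * (\<Sum>i<m. expectation (\<lambda>w. (norm (gf i (X w) - gf i xs))\<^sup>2))
    \<le> 2 * beta * (expectation (\<lambda>w. (1 / real m) * (\<Sum>i<m. f i (X w))) - (1 / real m) * (\<Sum>i<m. f i xs))"
proof -
  have sum_min: "(\<Sum>i<m. f i xs) \<le> (\<Sum>i<m. f i y)" for y
    by (rule mult_left_le_imp_le[OF min]) (use m in simp)
  have sq_int: "integrable M (\<lambda>w. (norm (gf i (X w) - gf i xs))\<^sup>2)" if "i < m" for i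
    using sq_integrable_grad_diff[OF smooth[OF that] _ X] beta unfolding sq_integrable_def by simp
  have sum_int: "integrable M (\<lambda>w. \<Sum>i<m. f i (X w))"
    using f_int by (intro Bochner_Integration.integrable_sum) simp
  have "(\<Sum>i<m. expectation (\<lambda>w. (norm (gf i (X w) - gf i xs))\<^sup>2))
      = expectation (\<lambda>w. \<Sum>i<m. (norm (gf i (X w) - gf i xs))\<^sup>2)"
    using sq_int by (intro Bochner_Integration.integral_sum[symmetric]) simp
  also have "\<dots> \<le> expectation (\<lambda>w. 2 * beta * ((\<Sum>i<m. f i (X w)) - (\<Sum>i<m. f i xs)))"
    using sq_int sum_int strongly_convex_grad_imp_convex[OF mu sconv]
    by (intro integral_mono sum_grad_dist_sq_le grad smooth beta sum_min) auto
  also have "\<dots> = 2 * beta * (expectation (\<lambda>w. \<Sum>i<m. f i (X w)) - (\<Sum>i<m. f i xs))"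
    using sum_int by (simp add: prob_space)
  finally show ?thesis
    using m by (simp add: field_simps divide_right_mono)
qed

end

theorem mainTheorem4:
  fixes M :: "'w measure"
    and m s K :: nat
    and F :: "nat \<Rightarrow> 'a::euclidean_space \<Rightarrow> real"
    and gradF :: "nat \<Rightarrow> 'a \<Rightarrow> 'a"
    and mu beta eta_l alpha gamma :: real
    and theta_star :: 'a
    and theta :: "nat \<Rightarrow> 'w \<Rightarrow> 'a"                  (* server model theta^t *)
    and mv :: "nat \<Rightarrow> 'w \<Rightarrow> 'a"                     (* server control variable m^t *)
    and c :: "nat \<Rightarrow> nat \<Rightarrow> 'w \<Rightarrow> 'a"              (* client control variables c_i^t *)
    and S :: "nat \<Rightarrow> 'w \<Rightarrow> nat set"                (* sampled set S^t *)
    and theta_loc :: "nat \<Rightarrow> nat \<Rightarrow> nat \<Rightarrow> 'w \<Rightarrow> 'a" (* theta^t_{i,k} *)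
    and G :: "nat \<Rightarrow> nat \<Rightarrow> nat \<Rightarrow> 'w \<Rightarrow> 'a"         (* G t i k = g_i(theta^t_{i,k-1}) *)
    and Hist :: "nat \<Rightarrow> 'w measure"
    and Fh :: "nat \<Rightarrow> nat \<Rightarrow> nat \<Rightarrow> 'w measure"
    and t :: nat
  assumes M: "prob_space M"
    and m_pos: "1 \<le> m" and s_range: "1 \<le> s" "s \<le> m" and K_pos: "1 \<le> K"
    and grad: "\<And>i. i < m \<Longrightarrow> has_gradient_everywhere (F i) (gradF i)"
    and mu_nonneg: "0 \<le> mu"
    and sconv: "\<And>i. i < m \<Longrightarrow> strongly_convex_grad mu (F i) (gradF i)"
    and beta_pos: "0 < beta"
    and smooth: "\<And>i. i < m \<Longrightarrow> smooth_grad beta (gradF i)"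
    and opt: "\<And>x. (1 / real m) * (\<Sum>i<m. F i theta_star) \<le> (1 / real m) * (\<Sum>i<m. F i x)"
    and step_nonneg: "0 \<le> eta_l * alpha * real K"
    and step_le: "eta_l * alpha * real K \<le> 1 / beta"
    \<comment> \<open>local updates of FedMoSWA (virtual trajectories for every client)\<close>
    and loc0: "\<And>r i w. 1 \<le> r \<Longrightarrow> i < m \<Longrightarrow> theta_loc r i 0 w = theta (r - 1) w"
    and locstep: "\<And>r i k w. 1 \<le> r \<Longrightarrow> i < m \<Longrightarrow> 1 \<le> k \<Longrightarrow> k \<le> K \<Longrightarrow>
        theta_loc r i k w = theta_loc r i (k - 1) w - eta_l *\<^sub>R (G r i k w + mv (r - 1) w - c (r - 1) i w)"
    and cupd: "\<And>r i w. 1 \<le> r \<Longrightarrow> i < m \<Longrightarrow>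
        c r i w = (if i \<in> S r w then (1 / real K) *\<^sub>R (\<Sum>k\<in>{1..K}. G r i k w) else c (r - 1) i w)"
    and thetaupd: "\<And>r w. 1 \<le> r \<Longrightarrow>
        theta r w = theta (r - 1) w + alpha *\<^sub>R ((1 / real s) *\<^sub>R (\<Sum>i\<in>S r w. theta_loc r i K w) - theta (r - 1) w)"
    and mvupd: "\<And>r w. 1 \<le> r \<Longrightarrow>
        mv r w = mv (r - 1) w + gamma *\<^sub>R ((1 / real s) *\<^sub>R (\<Sum>i\<in>S r w. (c r i w - mv (r - 1) w)))"
    \<comment> \<open>uniform client sampling, independent of the current control variables and gradient noise\<close>
    and S_meas: "\<And>r. 1 \<le> r \<Longrightarrow> S r \<in> measurable M (count_space UNIV)"
    and S_unif: "\<And>r. 1 \<le> r \<Longrightarrow> distr M (count_space UNIV) (S r) = measure_pmf (uniform_subsets m s)"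
    and Hist_sub: "\<And>r. 1 \<le> r \<Longrightarrow> subalgebra M (Hist r)"
    and Hist_c: "\<And>r i. 1 \<le> r \<Longrightarrow> i < m \<Longrightarrow> c (r - 1) i \<in> borel_measurable (Hist r)"
    and Hist_G: "\<And>r i k. 1 \<le> r \<Longrightarrow> i < m \<Longrightarrow> 1 \<le> k \<Longrightarrow> k \<le> K \<Longrightarrow> G r i k \<in> borel_measurable (Hist r)"
    and S_indep: "\<And>r. 1 \<le> r \<Longrightarrow> prob_space.indep_set M (sets (vimage_algebra (space M) (S r) (count_space UNIV))) (sets (Hist r))"
    \<comment> \<open>unbiased stochastic gradients: E[G r i k | Fh r i k] = gradF i (theta_loc r i (k-1))\<close>
    and Fh_sub: "\<And>r i k. 1 \<le> r \<Longrightarrow> i < m \<Longrightarrow> 1 \<le> k \<Longrightarrow> k \<le> K \<Longrightarrow> subalgebra M (Fh r i k)"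
    and Fh_meas: "\<And>r i k. 1 \<le> r \<Longrightarrow> i < m \<Longrightarrow> 1 \<le> k \<Longrightarrow> k \<le> K \<Longrightarrow>
        theta_loc r i (k - 1) \<in> borel_measurable (Fh r i k)"
    and unbiased: "\<And>r i k A. 1 \<le> r \<Longrightarrow> i < m \<Longrightarrow> 1 \<le> k \<Longrightarrow> k \<le> K \<Longrightarrow> A \<in> sets (Fh r i k) \<Longrightarrow>
        (LINT w:A|M. G r i k w) = (LINT w:A|M. gradF i (theta_loc r i (k - 1) w))"
    \<comment> \<open>finite second moments\<close>
    and sq_theta: "\<And>r. sq_integrable M (theta r)"
    and sq_mv: "\<And>r. sq_integrable M (mv r)"
    and sq_c: "\<And>r i. i < m \<Longrightarrow> sq_integrable M (c r i)"
    and sq_loc: "\<And>r i k. i < m \<Longrightarrow> k \<le> K \<Longrightarrow> sq_integrable M (theta_loc r i k)"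
    and sq_G: "\<And>r i k. i < m \<Longrightarrow> 1 \<le> k \<Longrightarrow> k \<le> K \<Longrightarrow> sq_integrable M (G r i k)"
    and F_int: "\<And>r i. i < m \<Longrightarrow> integrable M (\<lambda>w. F i (theta r w))"
    and t_pos: "1 \<le> t"
  shows
   "(1 / real m) * (\<Sum>i<m. (norm ((\<integral>w. c t i w \<partial>M) - gradF i theta_star))\<^sup>2)
    \<le> (1 - real s / real m) * ((1 / real m) * (\<Sum>i<m. (norm ((\<integral>w. c (t - 1) i w \<partial>M) - gradF i theta_star))\<^sup>2))
      + real s / real m *
        (4 * beta * ((\<integral>w. (1 / real m) * (\<Sum>i<m. F i (theta (t - 1) w)) \<partial>M) - (1 / real m) * (\<Sum>i<m. F i theta_star))
         + 2 * beta\<^sup>2 * ((1 / (real K * real m)) *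
              (\<Sum>k\<in>{1..K}. \<Sum>i<m. \<integral>w. (norm (theta_loc t i k w - theta (t - 1) w))\<^sup>2 \<partial>M)))"
proof -
  interpret prob_space M
    by (rule M)
  define p where "p = real s / real m"
  define a where "a i k = expectation (\<lambda>w. (norm (theta_loc t i k w - theta (t - 1) w))\<^sup>2)" for i k
  define h where "h i = expectation (\<lambda>w. (norm (gradF i (theta (t - 1) w) - gradF i theta_star))\<^sup>2)" for i
  define B where "B i = 2 * beta\<^sup>2 * ((1 / real K) * (\<Sum>k\<in>{1..K}. a i k)) + 2 * h i" for i
  define A where "A r i = (norm (expectation (c r i) - gradF i theta_star))\<^sup>2" for r i
  have client: "A t i \<le> (1 - p) * A (t - 1) i + p * B i" if i: "i < m" for i
  proof -
    have "integrable M (c (t - 1) i)" "\<And>k. 1 \<le> k \<Longrightarrow> k \<le> K \<Longrightarrow> integrable M (G t i k)"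
      using sq_c[OF i] sq_G[OF i] unfolding sq_integrable_def by auto
    from sampled_control_error_le[where x="theta_loc t i" and g="gradF i" and z=theta_star,
        OF S_meas[OF t_pos] S_unif[OF t_pos] i s_range K_pos Hist_sub[OF t_pos] S_indep[OF t_pos]
        Hist_c[OF t_pos i] this(1) Hist_G[OF t_pos i] this(2) cupd[OF t_pos i] Fh_sub[OF t_pos i]
        unbiased[OF t_pos i] smooth[OF i] less_imp_le[OF beta_pos] sq_loc[OF i]]
    have "A t i \<le> (1 - p) * A (t - 1) i + p * (2 * beta\<^sup>2 * ((1 / real K) *
        (\<Sum>k\<in>{1..K}. expectation (\<lambda>w. (norm (theta_loc t i k w - theta_loc t i 0 w))\<^sup>2)))
        + 2 * expectation (\<lambda>w. (norm (gradF i (theta_loc t i 0 w) - gradF i theta_star))\<^sup>2))"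
      unfolding A_def p_def .
    then show ?thesis
      unfolding B_def a_def h_def by (simp add: loc0[OF t_pos i])
  qed
  have h_mean: "(1 / real m) * (\<Sum>i<m. h i)
      \<le> 2 * beta * (expectation (\<lambda>w. (1 / real m) * (\<Sum>i<m. F i (theta (t - 1) w)))
        - (1 / real m) * (\<Sum>i<m. F i theta_star))"
    unfolding h_def
    by (rule expectation_mean_grad_dist_sq_le[OF m_pos grad mu_nonneg sconv beta_pos smooth opt sq_theta F_int])
  have "(\<Sum>i<m. B i) = 2 * beta\<^sup>2 * ((1 / real K) * (\<Sum>k\<in>{1..K}. \<Sum>i<m. a i k)) + 2 * (\<Sum>i<m. h i)"
    unfolding B_def sum.distrib sum_distrib_left[symmetric] by (subst sum.swap) simp
  then have "(1 / real m) * (\<Sum>i<m. B i)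
      = 2 * beta\<^sup>2 * ((1 / (real K * real m)) * (\<Sum>k\<in>{1..K}. \<Sum>i<m. a i k)) + 2 * ((1 / real m) * (\<Sum>i<m. h i))"
    by (simp add: algebra_simps)
  with h_mean have "(1 / real m) * (\<Sum>i<m. B i)
      \<le> 4 * beta * (expectation (\<lambda>w. (1 / real m) * (\<Sum>i<m. F i (theta (t - 1) w)))
          - (1 / real m) * (\<Sum>i<m. F i theta_star))
        + 2 * beta\<^sup>2 * ((1 / (real K * real m)) * (\<Sum>k\<in>{1..K}. \<Sum>i<m. a i k))"
    by linarith
  from mult_left_mono[OF this, of p] mean_le_of_convex_comb_le[of "{..<m}" "A t", OF client]
  show ?thesis
    unfolding A_def a_def p_def by simp
qed

end
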